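(* For all real $a>0$, $b>0$ and every complex $s$ with $\Re(s)>1$, \[\sum_{k=0}^\infty (-1)^k \zeta(s,ka+b)=(2a)^{-s} \sum_{n=0}^\infty \Big\{\zeta\Big(s,\frac{n+b}{2a}\Big)-\zeta\Big(s,\frac{n+b}{2a}+\frac{1}{2}\Big)\Big\}.\]
   Context: $\zeta(s,\alpha)=\sum_{n=0}^\infty (n+\alpha)^{-s}$ denotes the Hurwitz zeta function ($\Re(s)>1$, $\alpha>0$). *)

theory Defs
  imports "HOL-Analysis.Analysis"
begin

text \<open>Hurwitz zeta function, defined by its series (intended for Re s > 1, alpha > 0).\<close>
definition hurwitz_zeta :: "complex \<Rightarrow> real \<Rightarrow> complex" where
  "hurwitz_zeta s \<alpha> = (\<Sum>n. (of_real (real n + \<alpha>)) powr (- s))"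

end

theory Submission
  imports Defs "HOL-Real_Asymp.Real_Asymp" "HOL-Probability.Characteristic_Functions"
begin

(* Pair the alternating series: zeta(s, 2ma+b) - zeta(s, (2m+1)a+b) is the sum over n of
   (n+b+2ma)^(-s) - (n+b+2ma+a)^(-s). By the mean value theorem this double sequence is
   dominated by (2ma+b/2)^(-q) (n+b/2)^(-q) with q = (Re s + 1)/2 > 1, so the two summations
   may be exchanged. Summing over m first and pulling out the factor (2a)^(-s) gives
   zeta(s, (n+b)/(2a)) - zeta(s, (n+b)/(2a) + 1/2). Finally, since zeta(s, ka+b) tends to 0,
   pairing consecutive terms does not change the sum of the alternating series. *)

lemma summable_affine_powr:
  fixes c d p :: real
  assumes "d > 0" "c > 0" "p > 1"
  shows "summable (\<lambda>n. (d * real n + c) powr (- p))"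
proof (rule summable_comparison_test_ev)
  show "summable (\<lambda>n. d powr (- p) * real n powr (- p))"
    using summable_real_powr_iff[of "- p"] assms by (intro summable_mult) simp
  show "\<forall>\<^sub>F n in sequentially. norm ((d * real n + c) powr (- p)) \<le> d powr (- p) * real n powr (- p)"
    using eventually_ge_at_top[of "1::nat"]
  proof eventually_elim
    case (elim n)
    have "(d * real n + c) powr (- p) \<le> (d * real n) powr (- p)"
      using elim assms by (intro powr_mono2') auto
    then show ?case
      using assms by (simp add: powr_mult)
  qed
qed

lemma sums_swap_dominated:
  fixes g :: "nat \<Rightarrow> nat \<Rightarrow> 'a :: {real_normed_algebra, banach}"
  assumes bound: "\<And>m n. norm (g m n) \<le> A m * B n"
    and "summable A" "summable B" "\<And>m. A m \<ge> 0" "\<And>n. B n \<ge> 0"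
  shows "summable (\<lambda>n. \<Sum>m. g m n)" "(\<lambda>m. \<Sum>n. g m n) sums (\<Sum>n. \<Sum>m. g m n)"
proof -
  have row: "summable (\<lambda>n. g m n)" for m
    by (rule summable_comparison_test[OF _ summable_mult[OF \<open>summable B\<close>, of "A m"]])
       (use bound in auto)
  have col: "summable (\<lambda>m. g m n)" for n
    by (rule summable_comparison_test[OF _ summable_mult2[OF \<open>summable A\<close>, of "B n"]])
       (use bound in auto)
  have partial_bound: "norm (\<Sum>m<N. g m n) \<le> suminf A * B n" for N n
  proof -
    have "norm (\<Sum>m<N. g m n) \<le> (\<Sum>m<N. A m) * B n"
      using bound by (auto simp: sum_distrib_right intro!: order.trans[OF norm_sum] sum_mono)
    also have "\<dots> \<le> suminf A * B n"
      using assms by (intro mult_right_mono sum_le_suminf) auto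
    finally show ?thesis .
  qed
  have "summable (\<lambda>n. norm (\<Sum>m. g m n)) \<and> (\<lambda>N. \<Sum>n. \<Sum>m<N. g m n) \<longlonglongrightarrow> (\<Sum>n. \<Sum>m. g m n)"
  proof (rule tannerys_theorem[where M = "\<lambda>n. suminf A * B n", THEN conjunct2])
    show "(\<lambda>N. \<Sum>m<N. g m n) \<longlonglongrightarrow> (\<Sum>m. g m n)" for n
      using col by (rule summable_LIMSEQ)
    show "summable (\<lambda>n. suminf A * B n)"
      using \<open>summable B\<close> by (rule summable_mult)
    show "\<forall>\<^sub>F (n, N) in at_top \<times>\<^sub>F sequentially. norm (\<Sum>m<N. g m n) \<le> suminf A * B n"
      using partial_bound by (intro always_eventually) auto
  qed simp
  moreover have "(\<Sum>n. \<Sum>m<N. g m n) = (\<Sum>m<N. \<Sum>n. g m n)" for N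
    using row by (rule suminf_sum)
  ultimately show "summable (\<lambda>n. \<Sum>m. g m n)" "(\<lambda>m. \<Sum>n. g m n) sums (\<Sum>n. \<Sum>m. g m n)"
    by (simp_all add: sums_def summable_norm_cancel)
qed

lemma sums_of_pairs:
  fixes f :: "nat \<Rightarrow> 'a :: real_normed_vector"
  assumes "(\<lambda>m. f (2 * m) + f (2 * m + 1)) sums S" "f \<longlonglongrightarrow> 0"
  shows "f sums S"
proof -
  have "(\<Sum>k<2 * N. f k) = (\<Sum>m<N. f (2 * m) + f (2 * m + 1))" for N
    by (induction N) (simp_all add: algebra_simps)
  then have even: "(\<lambda>N. \<Sum>k<2 * N. f k) \<longlonglongrightarrow> S"
    using assms(1) by (simp add: sums_def)
  have "(\<lambda>N. f (2 * N)) \<longlonglongrightarrow> 0"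
    using LIMSEQ_subseq_LIMSEQ[OF assms(2), of "\<lambda>N. 2 * N"] by (simp add: strict_mono_def o_def)
  with even have "(\<lambda>N. (\<Sum>k<2 * N. f k) + f (2 * N)) \<longlonglongrightarrow> S + 0"
    by (rule tendsto_add)
  then have odd: "(\<lambda>N. \<Sum>k<2 * N + 1. f k) \<longlonglongrightarrow> S"
    by simp
  show ?thesis
    unfolding sums_def using even odd by (rule limseq_even_odd)
qed

lemma norm_powr_diff_le:
  fixes x d :: real and s :: complex
  assumes "x > 0" "d \<ge> 0" "Re s \<ge> -1"
  shows "norm (complex_of_real x powr (- s) - complex_of_real (x + d) powr (- s))
           \<le> norm s * x powr (- Re s - 1) * d"
proof -
  define S where "S = closed_segment (complex_of_real x) (complex_of_real (x + d))"
  have S_eq: "S = complex_of_real ` {x..x + d}"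
    using assms by (simp add: S_def closed_segment_Reals closed_segment_eq_real_ivl)
  have "norm (complex_of_real x powr (- s) - complex_of_real (x + d) powr (- s))
          \<le> norm s * x powr (- Re s - 1) * norm (complex_of_real x - complex_of_real (x + d))"
  proof (rule field_differentiable_bound[where S = S and f' = "\<lambda>z. - s * z powr (- s - 1)"])
    show "convex S" "complex_of_real x \<in> S" "complex_of_real (x + d) \<in> S"
      by (simp_all add: S_def)
  next
    fix z assume "z \<in> S"
    then obtain t where t: "z = complex_of_real t" "x \<le> t" "t \<le> x + d"
      by (auto simp: S_eq)
    then have "z \<notin> \<real>\<^sub>\<le>\<^sub>0"
      using assms by (auto simp: nonpos_Reals_def)
    then show "((\<lambda>z. z powr (- s)) has_field_derivative - s * z powr (- s - 1)) (at z within S)"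
      by (rule has_field_derivative_at_within[OF has_field_derivative_powr])
    have "norm (- s * z powr (- s - 1)) = norm s * t powr (- Re s - 1)"
      using t assms by (simp add: norm_mult norm_powr_real_powr)
    also have "\<dots> \<le> norm s * x powr (- Re s - 1)"
      using t assms by (intro mult_left_mono powr_mono2') auto
    finally show "norm (- s * z powr (- s - 1)) \<le> norm s * x powr (- Re s - 1)" .
  qed
  also have "norm (complex_of_real x - complex_of_real (x + d)) = d"
    using assms by (simp flip: of_real_diff)
  finally show ?thesis .
qed

lemma norm_powr_diff_le_product:
  fixes x y d :: real and s :: complex
  defines "q \<equiv> (Re s + 1) / 2"
  assumes "x > 0" "y > 0" "d \<ge> 0" "Re s \<ge> -1"
  shows "norm (complex_of_real (x + y) powr (- s) - complex_of_real (x + y + d) powr (- s))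
           \<le> norm s * d * (x powr (- q) * y powr (- q))"
proof -
  have "(x + y) powr (- Re s - 1) = (x + y) powr (- q) * (x + y) powr (- q)"
    by (simp add: q_def flip: powr_add)
  also have "\<dots> \<le> x powr (- q) * y powr (- q)"
  proof (rule mult_mono)
    show "(x + y) powr (- q) \<le> x powr (- q)" "(x + y) powr (- q) \<le> y powr (- q)"
      using assms by (auto simp: q_def intro!: powr_mono2')
  qed simp_all
  finally have *: "(x + y) powr (- Re s - 1) \<le> x powr (- q) * y powr (- q)" .
  have "norm (complex_of_real (x + y) powr (- s) - complex_of_real (x + y + d) powr (- s))
          \<le> norm s * (x + y) powr (- Re s - 1) * d"
    using assms by (intro norm_powr_diff_le) auto
  also have "\<dots> \<le> norm s * (x powr (- q) * y powr (- q)) * d"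
    using assms * by (intro mult_right_mono mult_left_mono) auto
  finally show ?thesis
    by (simp only: mult_ac)
qed

lemma hurwitz_zeta_sums:
  assumes "x > 0" "Re s > 1"
  shows "(\<lambda>n. complex_of_real (real n + x) powr (- s)) sums hurwitz_zeta s x"
proof -
  have "norm (complex_of_real (real n + x) powr (- s)) = (1 * real n + x) powr (- Re s)" for n
    using assms by (subst norm_powr_real_powr) auto
  moreover have "summable (\<lambda>n. (1 * real n + x) powr (- Re s))"
    using assms by (intro summable_affine_powr) auto
  ultimately have "summable (\<lambda>n. norm (complex_of_real (real n + x) powr (- s)))"
    by simp
  then show ?thesis
    unfolding hurwitz_zeta_def by (rule summable_sums[OF summable_norm_cancel])
qed

lemma hurwitz_zeta_dilate_sums:
  assumes "c > 0" "x > 0" "Re s > 1"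
  shows "(\<lambda>m. complex_of_real (c * real m + x) powr (- s))
           sums (complex_of_real c powr (- s) * hurwitz_zeta s (x / c))"
proof -
  have "complex_of_real (c * real m + x) powr (- s)
          = complex_of_real c powr (- s) * complex_of_real (real m + x / c) powr (- s)" for m
  proof -
    have "complex_of_real (c * real m + x) = complex_of_real c * complex_of_real (real m + x / c)"
      using assms by (simp add: field_simps)
    also have "\<dots> powr (- s) = complex_of_real c powr (- s) * complex_of_real (real m + x / c) powr (- s)"
      using assms by (intro powr_times_real) auto
    finally show ?thesis .
  qed
  then show ?thesis
    using assms by (simp only:) (intro sums_mult hurwitz_zeta_sums, auto)
qed

lemma hurwitz_zeta_tendsto_0:
  assumes "Re s > 1" "filterlim x at_top sequentially"
  shows "(\<lambda>n. hurwitz_zeta s (x n)) \<longlonglongrightarrow> 0"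
proof -
  define F where "F k n = complex_of_real (real k + x n) powr (- s)" for k n
  have "(\<lambda>n. \<Sum>k. F k n) \<longlonglongrightarrow> (\<Sum>k. 0)"
  proof (rule tannerys_theorem[where M = "\<lambda>k. (real k + 1) powr (- Re s)", THEN conjunct2, THEN conjunct2])
    fix k :: nat
    have "filterlim (\<lambda>n. real k + x n) at_top sequentially"
      by (rule filterlim_tendsto_add_at_top[OF tendsto_const assms(2)])
    then have "(\<lambda>n. (real k + x n) powr (- Re s)) \<longlonglongrightarrow> 0"
      using assms by (intro tendsto_neg_powr) auto
    moreover have "\<forall>\<^sub>F n in sequentially. x n > 0"
      using assms(2) by (simp add: filterlim_at_top_dense)
    then have "\<forall>\<^sub>F n in sequentially. (real k + x n) powr (- Re s) = norm (F k n)"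
      by (rule eventually_mono) (simp add: F_def norm_powr_real_powr)
    ultimately have "(\<lambda>n. norm (F k n)) \<longlonglongrightarrow> 0"
      by (rule Lim_transform_eventually)
    then show "(\<lambda>n. F k n) \<longlonglongrightarrow> 0"
      by (rule tendsto_norm_zero_cancel)
  next
    show "summable (\<lambda>k. (real k + 1) powr (- Re s))"
      using summable_affine_powr[of 1 1 "Re s"] assms by simp
  next
    have "\<forall>\<^sub>F n in sequentially. x n \<ge> 1"
      using assms(2) by (simp add: filterlim_at_top)
    then have "\<forall>\<^sub>F (k :: nat, n) in at_top \<times>\<^sub>F sequentially. x n \<ge> 1"
      by (subst eventually_prod2) simp_all
    then show "\<forall>\<^sub>F (k, n) in at_top \<times>\<^sub>F sequentially. norm (F k n) \<le> (real k + 1) powr (- Re s)"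
    proof (rule eventually_mono, clarify)
      fix k :: nat and n assume "x n \<ge> 1"
      then have "(real k + x n) powr (- Re s) \<le> (real k + 1) powr (- Re s)"
        using assms(1) by (intro powr_mono2') auto
      then show "norm (F k n) \<le> (real k + 1) powr (- Re s)"
        using \<open>x n \<ge> 1\<close> by (simp add: F_def norm_powr_real_powr)
    qed
  qed simp
  then show ?thesis
    unfolding F_def hurwitz_zeta_def by simp
qed

definition alt_hurwitz_kernel :: "complex \<Rightarrow> real \<Rightarrow> real \<Rightarrow> nat \<Rightarrow> nat \<Rightarrow> complex" where
  "alt_hurwitz_kernel s a b m n =
     complex_of_real (2 * a * real m + (real n + b)) powr (- s)
     - complex_of_real (2 * a * real m + (real n + b + a)) powr (- s)"

lemma alt_hurwitz_kernel_row_sums: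
  assumes "a > 0" "b > 0" "Re s > 1"
  shows "(\<lambda>n. alt_hurwitz_kernel s a b m n)
           sums (hurwitz_zeta s (real (2 * m) * a + b) - hurwitz_zeta s (real (2 * m + 1) * a + b))"
proof -
  have "real (2 * m) * a + b > 0" "real (2 * m + 1) * a + b > 0"
    using assms by (simp_all add: add_nonneg_pos)
  then have "(\<lambda>n. complex_of_real (real n + (real (2 * m) * a + b)) powr (- s)
                 - complex_of_real (real n + (real (2 * m + 1) * a + b)) powr (- s))
           sums (hurwitz_zeta s (real (2 * m) * a + b) - hurwitz_zeta s (real (2 * m + 1) * a + b))"
    using assms by (intro sums_diff hurwitz_zeta_sums)
  then show ?thesis
    by (simp add: alt_hurwitz_kernel_def algebra_simps)
qed

lemma alt_hurwitz_kernel_col_sums: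
  assumes "a > 0" "b > 0" "Re s > 1"
  shows "(\<lambda>m. alt_hurwitz_kernel s a b m n)
           sums (complex_of_real (2 * a) powr (- s) *
                 (hurwitz_zeta s ((real n + b) / (2 * a)) - hurwitz_zeta s ((real n + b) / (2 * a) + 1 / 2)))"
proof -
  have "(\<lambda>m. alt_hurwitz_kernel s a b m n)
          sums (complex_of_real (2 * a) powr (- s) * hurwitz_zeta s ((real n + b) / (2 * a))
                - complex_of_real (2 * a) powr (- s) * hurwitz_zeta s ((real n + b + a) / (2 * a)))"
    unfolding alt_hurwitz_kernel_def using assms
    by (intro sums_diff hurwitz_zeta_dilate_sums) auto
  moreover have "(real n + b + a) / (2 * a) = (real n + b) / (2 * a) + 1 / 2"
    using assms by (simp add: field_simps)
  ultimately show ?thesis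
    by (simp add: right_diff_distrib)
qed

lemma norm_alt_hurwitz_kernel_le:
  fixes s :: complex
  defines "q \<equiv> (Re s + 1) / 2"
  assumes "a > 0" "b > 0" "Re s > 1"
  shows "norm (alt_hurwitz_kernel s a b m n)
           \<le> (norm s * a * (2 * a * real m + b / 2) powr (- q)) * (real n + b / 2) powr (- q)"
proof -
  define x where "x = 2 * a * real m + b / 2"
  define y where "y = real n + b / 2"
  have "x > 0" "y > 0"
    using assms by (simp_all add: x_def y_def add_nonneg_pos)
  have "alt_hurwitz_kernel s a b m n
          = complex_of_real (x + y) powr (- s) - complex_of_real (x + y + a) powr (- s)"
    by (simp add: alt_hurwitz_kernel_def x_def y_def algebra_simps)
  also have "norm \<dots> \<le> norm s * a * (x powr (- q) * y powr (- q))"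
    unfolding q_def using assms \<open>x > 0\<close> \<open>y > 0\<close> by (intro norm_powr_diff_le_product) auto
  finally show ?thesis
    by (simp add: x_def y_def mult_ac)
qed

lemma alt_hurwitz_kernel_sums_swap:
  assumes "a > 0" "b > 0" "Re s > 1"
  shows "summable (\<lambda>n. \<Sum>m. alt_hurwitz_kernel s a b m n)"
    "(\<lambda>m. \<Sum>n. alt_hurwitz_kernel s a b m n) sums (\<Sum>n. \<Sum>m. alt_hurwitz_kernel s a b m n)"
proof -
  define q where "q = (Re s + 1) / 2"
  have "summable (\<lambda>m. norm s * a * (2 * a * real m + b / 2) powr (- q))"
    using summable_affine_powr[of "2 * a" "b / 2" q] assms by (intro summable_mult) (simp_all add: q_def)
  moreover have "summable (\<lambda>n. (real n + b / 2) powr (- q))"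
    using summable_affine_powr[of 1 "b / 2" q] assms by (simp add: q_def)
  ultimately show "summable (\<lambda>n. \<Sum>m. alt_hurwitz_kernel s a b m n)"
    "(\<lambda>m. \<Sum>n. alt_hurwitz_kernel s a b m n) sums (\<Sum>n. \<Sum>m. alt_hurwitz_kernel s a b m n)"
    using sums_swap_dominated[OF norm_alt_hurwitz_kernel_le[OF assms, folded q_def]] assms by auto
qed

theorem mainTheorem13:
  fixes a b :: real and s :: complex
  assumes "a > 0" and "b > 0" and "Re s > 1"
  shows "summable (\<lambda>n::nat. hurwitz_zeta s ((real n + b) / (2 * a))
                      - hurwitz_zeta s ((real n + b) / (2 * a) + 1 / 2)) \<and>
         (\<lambda>k::nat. (-1) ^ k * hurwitz_zeta s (real k * a + b)) sums
           (of_real (2 * a) powr (- s) *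
            (\<Sum>n. hurwitz_zeta s ((real n + b) / (2 * a))
                 - hurwitz_zeta s ((real n + b) / (2 * a) + 1 / 2)))"
proof -
  define K where "K = alt_hurwitz_kernel s a b"
  define G where "G = (\<lambda>n::nat. hurwitz_zeta s ((real n + b) / (2 * a))
                                  - hurwitz_zeta s ((real n + b) / (2 * a) + 1 / 2))"
  define c where "c = complex_of_real (2 * a) powr (- s)"
  have "(\<Sum>m. K m n) = c * G n" for n
    using alt_hurwitz_kernel_col_sums[OF assms] by (simp add: K_def c_def G_def sums_iff)
  moreover have "c \<noteq> 0"
    using assms by (simp add: c_def)
  ultimately have "summable G" and pairs: "(\<lambda>m. \<Sum>n. K m n) sums (c * suminf G)"
    using alt_hurwitz_kernel_sums_swap[OF assms] by (simp_all add: K_def suminf_mult)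
  have "(\<Sum>n. K m n) = (-1) ^ (2 * m) * hurwitz_zeta s (real (2 * m) * a + b)
                      + (-1) ^ (2 * m + 1) * hurwitz_zeta s (real (2 * m + 1) * a + b)" for m
    using alt_hurwitz_kernel_row_sums[OF assms] by (simp add: K_def sums_iff)
  with pairs have "(\<lambda>m. (-1) ^ (2 * m) * hurwitz_zeta s (real (2 * m) * a + b)
                      + (-1) ^ (2 * m + 1) * hurwitz_zeta s (real (2 * m + 1) * a + b)) sums (c * suminf G)"
    by simp
  moreover have "(\<lambda>k. hurwitz_zeta s (real k * a + b)) \<longlonglongrightarrow> 0"
    using assms(3) by (rule hurwitz_zeta_tendsto_0) (use assms(1) in real_asymp)
  then have "(\<lambda>k. norm ((-1) ^ k * hurwitz_zeta s (real k * a + b))) \<longlonglongrightarrow> 0"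
    by (simp add: norm_mult norm_power tendsto_norm_zero)
  then have "(\<lambda>k. (-1) ^ k * hurwitz_zeta s (real k * a + b)) \<longlonglongrightarrow> 0"
    by (rule tendsto_norm_zero_cancel)
  ultimately have "(\<lambda>k. (-1) ^ k * hurwitz_zeta s (real k * a + b)) sums (c * suminf G)"
    by (rule sums_of_pairs)
  with \<open>summable G\<close> show ?thesis
    unfolding G_def c_def by blast
qed

end
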